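(* Let $L$ be a linear forest with $k$ vertices. Let $G$ and $G'$ be graphs, each of which is a disjoint union of paths each having at least $k-1$ vertices, such that $|V(G)|=|V(G')|$ and $|E(G)|=|E(G')|$. Then $s(G,L)=s(G',L)$; that is, the number of induced copies of $L$ in such a graph depends only on $L$, the number of vertices, and the number of edges.
   Context: A linear forest is a disjoint union of paths. For graphs $G$ and $H$, $s(G,H)$ is the number of vertex subsets $X\subseteq V(G)$ such that the induced subgraph $G[X]$ is isomorphic to $H$. *)

theory Defs
  imports Main "HOL-Library.Disjoint_Sets"
begin

text \<open>A (simple, undirected) graph is given by a vertex set V and an edge set E,
  each edge being a two-element subset of V.\<close>

definition induced_edges :: "'a set set \<Rightarrow> 'a set \<Rightarrow> 'a set set" where
  "induced_edges E X = {e \<in> E. e \<subseteq> X}"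

definition is_path_graph :: "'a set \<Rightarrow> 'a set set \<Rightarrow> bool" where
  "is_path_graph V E \<longleftrightarrow> (\<exists>xs. xs \<noteq> [] \<and> distinct xs \<and> set xs = V \<and>
      E = {{xs ! i, xs ! Suc i} | i. Suc i < length xs})"

definition path_decomposition :: "'a set \<Rightarrow> 'a set set \<Rightarrow> 'a set set \<Rightarrow> bool" where
  "path_decomposition V E P \<longleftrightarrow> partition_on V P \<and>
      (\<forall>p\<in>P. is_path_graph p (induced_edges E p)) \<and>
      (\<forall>e\<in>E. \<exists>p\<in>P. e \<subseteq> p)"

definition linear_forest :: "'a set \<Rightarrow> 'a set set \<Rightarrow> bool" where
  "linear_forest V E \<longleftrightarrow> (\<exists>P. path_decomposition V E P)"

definition graph_iso :: "'a set \<Rightarrow> 'a set set \<Rightarrow> 'b set \<Rightarrow> 'b set set \<Rightarrow> bool" where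
  "graph_iso V E W F \<longleftrightarrow> (\<exists>f. bij_betw f V W \<and>
      (\<forall>x\<in>V. \<forall>y\<in>V. {x, y} \<in> E \<longleftrightarrow> {f x, f y} \<in> F))"

definition induced_count :: "'a set \<Rightarrow> 'a set set \<Rightarrow> 'b set \<Rightarrow> 'b set set \<Rightarrow> nat" where
  "induced_count V E W F = card {X. X \<subseteq> V \<and> graph_iso X (induced_edges E X) W F}"

end

theory Submission
  imports Defs
begin

text \<open>A disjoint union of paths is modelled by a set of natural numbers whose maximal runs of
  consecutive integers are the paths. Moving one vertex from the end of a path to the start of the
  next one does not change the number of induced copies of a graph on \<open>k\<close> vertices, as long as
  at least \<open>k - 1\<close> vertices lie on either side of the gap. A copy containing the moved vertex
  occupies a run of some length \<open>r\<close> ending there; once that run is transported far away, the two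
  ways of placing the remaining \<open>k - r\<close> vertices differ by sliding a gap across \<open>r\<close> positions,
  which is the same statement with fewer vertices left to choose. Such moves connect any two lists
  of path lengths with equal length and sum.\<close>

section \<open>Graph isomorphism\<close>

lemma graph_iso_sym:
  assumes "graph_iso A EA B EB"
  shows "graph_iso B EB A EA"
proof -
  obtain f where f: "bij_betw f A B" "\<forall>x\<in>A. \<forall>y\<in>A. {x,y} \<in> EA \<longleftrightarrow> {f x, f y} \<in> EB"
    using assms unfolding graph_iso_def by blast
  let ?g = "inv_into A f"
  have g: "bij_betw ?g B A" using f(1) by (rule bij_betw_inv_into)
  have "{x,y} \<in> EB \<longleftrightarrow> {?g x, ?g y} \<in> EA" if "x \<in> B" "y \<in> B" for x y
    using f that bij_betw_inv_into_right[OF f(1)] bij_betwE[OF g] by metis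
  then show ?thesis using g unfolding graph_iso_def by blast
qed

lemma graph_iso_trans:
  assumes "graph_iso A EA B EB" "graph_iso B EB C EC"
  shows "graph_iso A EA C EC"
proof -
  obtain f where f: "bij_betw f A B" "\<forall>x\<in>A. \<forall>y\<in>A. {x,y} \<in> EA \<longleftrightarrow> {f x, f y} \<in> EB"
    using assms(1) unfolding graph_iso_def by blast
  obtain g where g: "bij_betw g B C" "\<forall>x\<in>B. \<forall>y\<in>B. {x,y} \<in> EB \<longleftrightarrow> {g x, g y} \<in> EC"
    using assms(2) unfolding graph_iso_def by blast
  have "bij_betw (g \<circ> f) A C" using f(1) g(1) by (rule bij_betw_trans)
  moreover have "\<forall>x\<in>A. \<forall>y\<in>A. {x,y} \<in> EA \<longleftrightarrow> {(g \<circ> f) x, (g \<circ> f) y} \<in> EC"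
    using f g bij_betwE[OF f(1)] by simp
  ultimately show ?thesis unfolding graph_iso_def by blast
qed

lemma graph_iso_iff_left:
  "graph_iso A EA B EB \<Longrightarrow> graph_iso A EA C EC \<longleftrightarrow> graph_iso B EB C EC"
  using graph_iso_sym graph_iso_trans by metis

lemma graph_iso_refl: "graph_iso A E A E"
  unfolding graph_iso_def by (metis bij_betw_id id_apply)

lemma graph_iso_Un:
  assumes "graph_iso A EA B EB" "graph_iso A' EA' B' EB'"
    and "A \<inter> A' = {}" "B \<inter> B' = {}"
    and "EA \<subseteq> Pow A" "EA' \<subseteq> Pow A'" "EB \<subseteq> Pow B" "EB' \<subseteq> Pow B'"
  shows "graph_iso (A \<union> A') (EA \<union> EA') (B \<union> B') (EB \<union> EB')"
proof -
  obtain f where f: "bij_betw f A B" "\<forall>x\<in>A. \<forall>y\<in>A. {x,y} \<in> EA \<longleftrightarrow> {f x, f y} \<in> EB"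
    using assms(1) unfolding graph_iso_def by blast
  obtain g where g: "bij_betw g A' B'" "\<forall>x\<in>A'. \<forall>y\<in>A'. {x,y} \<in> EA' \<longleftrightarrow> {g x, g y} \<in> EB'"
    using assms(2) unfolding graph_iso_def by blast
  define h where "h x = (if x \<in> A then f x else g x)" for x
  have "bij_betw h A B"
    using f(1) by (rule bij_betw_cong[THEN iffD1, rotated]) (simp add: h_def)
  moreover have "bij_betw h A' B'"
    using g(1) by (rule bij_betw_cong[THEN iffD1, rotated]) (use assms(3) in \<open>auto simp: h_def\<close>)
  ultimately have h: "bij_betw h (A \<union> A') (B \<union> B')"
    using assms(4) by (rule bij_betw_combine)
  have "{x,y} \<in> EA \<union> EA' \<longleftrightarrow> {h x, h y} \<in> EB \<union> EB'" if "x \<in> A \<union> A'" "y \<in> A \<union> A'" for x y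
  proof -
    have hA: "h z \<in> B" if "z \<in> A" for z using that bij_betwE[OF f(1)] by (simp add: h_def)
    have hA': "h z \<in> B'" "h z \<notin> B" if "z \<in> A'" for z
      using that bij_betwE[OF g(1)] assms(3,4) by (auto simp: h_def)
    have out: "{u,v} \<notin> EA'" if "u \<in> A" for u v using that assms(3,6) by blast
    have out': "{u,v} \<notin> EA" if "u \<in> A'" for u v using that assms(3,5) by blast
    have out_img: "{u,v} \<notin> EB'" if "u \<in> B" for u v using that assms(4,8) by blast
    have out_img': "{u,v} \<notin> EB" if "u \<in> B'" for u v using that assms(4,7) by blast
    have mixed: "{u,v} \<notin> EA \<union> EA' \<and> {h u, h v} \<notin> EB \<union> EB'" if "u \<in> A" "v \<in> A'" for u v
      using out[OF that(1), of v] out'[OF that(2), of u] out_img[OF hA[OF that(1)], of "h v"]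
        out_img'[OF hA'(1)[OF that(2)], of "h u"] by (simp add: insert_commute)
    show ?thesis
    proof (cases "x \<in> A"; cases "y \<in> A")
      assume "x \<in> A" "y \<in> A"
      moreover have "h x = f x" "h y = f y" using calculation by (simp_all add: h_def)
      ultimately show ?thesis using f(2) hA out out_img by (metis Un_iff)
    next
      assume "x \<notin> A" "y \<notin> A"
      moreover have "h x = g x" "h y = g y" using calculation by (simp_all add: h_def)
      ultimately show ?thesis using that g(2) hA' out' out_img' by (metis Un_iff)
    next
      assume "x \<in> A" "y \<notin> A"
      then show ?thesis using that mixed[of x y] by blast
    next
      assume "x \<notin> A" "y \<in> A"
      then show ?thesis using that mixed[of y x] by (simp add: insert_commute)
    qed
  qed
  then show ?thesis using h unfolding graph_iso_def by blast
qed

lemma card_Collect_bij_betw: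
  assumes "bij_betw g A B" "\<And>x. x \<in> A \<Longrightarrow> P x \<longleftrightarrow> Q (g x)"
  shows "card {x \<in> A. P x} = card {y \<in> B. Q y}"
proof -
  have "g ` {x \<in> A. P x} = {y \<in> B. Q y}"
    using assms bij_betw_imp_surj_on[OF assms(1)] by (auto simp: bij_betw_def)
  moreover have "inj_on g {x \<in> A. P x}"
    using assms(1) by (auto simp: bij_betw_def intro: inj_on_subset)
  ultimately show ?thesis by (metis card_image)
qed

lemma graph_iso_induced_edges:
  assumes "bij_betw f V V'" "\<forall>x\<in>V. \<forall>y\<in>V. {x,y} \<in> E \<longleftrightarrow> {f x, f y} \<in> E'" "X \<subseteq> V"
  shows "graph_iso X (induced_edges E X) (f ` X) (induced_edges E' (f ` X))"
proof -
  have "bij_betw f X (f ` X)"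
    using assms(1,3) by (auto simp: bij_betw_def intro: inj_on_subset)
  moreover have "{x,y} \<in> induced_edges E X \<longleftrightarrow> {f x, f y} \<in> induced_edges E' (f ` X)"
    if "x \<in> X" "y \<in> X" for x y
    using that assms(2,3) by (auto simp: induced_edges_def)
  ultimately show ?thesis unfolding graph_iso_def by blast
qed

lemma induced_count_graph_iso:
  assumes "graph_iso V E V' E'"
  shows "induced_count V E W F = induced_count V' E' W F"
proof -
  obtain f where f: "bij_betw f V V'" "\<forall>x\<in>V. \<forall>y\<in>V. {x,y} \<in> E \<longleftrightarrow> {f x, f y} \<in> E'"
    using assms unfolding graph_iso_def by blast
  have "graph_iso X (induced_edges E X) W F \<longleftrightarrow> graph_iso (f ` X) (induced_edges E' (f ` X)) W F"
    if "X \<in> Pow V" for X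
    using that by (intro graph_iso_iff_left graph_iso_induced_edges[OF f]) auto
  from card_Collect_bij_betw[OF bij_betw_Pow[OF f(1)], where P = "\<lambda>X. graph_iso X (induced_edges E X) W F"
      and Q = "\<lambda>Y. graph_iso Y (induced_edges E' Y) W F", OF this]
  show ?thesis unfolding induced_count_def by (simp add: Pow_def conj_commute)
qed

section \<open>Sets of naturals as disjoint unions of paths\<close>

definition nat_path_edges :: "nat set \<Rightarrow> nat set set" where
  "nat_path_edges S = {{i, Suc i} | i. i \<in> S \<and> Suc i \<in> S}"

lemma doubleton_in_nat_path_edges:
  "{x,y} \<in> nat_path_edges S \<longleftrightarrow> x \<in> S \<and> y \<in> S \<and> (y = Suc x \<or> x = Suc y)"
  unfolding nat_path_edges_def by (auto simp: doubleton_eq_iff)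

lemma nat_path_edges_subset_Pow: "nat_path_edges S \<subseteq> Pow S"
  unfolding nat_path_edges_def by auto

lemma induced_edges_nat_path_edges:
  "Y \<subseteq> S \<Longrightarrow> induced_edges (nat_path_edges S) Y = nat_path_edges Y"
  unfolding induced_edges_def nat_path_edges_def by auto

lemma nat_path_edges_Un:
  assumes "\<And>x y. x \<in> A \<Longrightarrow> y \<in> B \<Longrightarrow> y \<noteq> Suc x \<and> x \<noteq> Suc y"
  shows "nat_path_edges (A \<union> B) = nat_path_edges A \<union> nat_path_edges B"
  using assms unfolding nat_path_edges_def by blast

lemma graph_iso_nat_path_interval:
  "graph_iso {p..<p+r} (nat_path_edges {p..<p+r}) {q..<q+r} (nat_path_edges {q..<q+r})"
proof -
  have "bij_betw (\<lambda>x. x + q - p) {p..<p+r} {q..<q+r}"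
    by (rule bij_betw_byWitness[where f'="\<lambda>x. x + p - q"]) (auto intro: image_eqI[of _ _ "_ + p - q"])
  moreover have "{x,y} \<in> nat_path_edges {p..<p+r} \<longleftrightarrow>
      {x + q - p, y + q - p} \<in> nat_path_edges {q..<q+r}" if "x \<in> {p..<p+r}" "y \<in> {p..<p+r}" for x y
    using that by (auto simp: doubleton_in_nat_path_edges)
  ultimately show ?thesis unfolding graph_iso_def by blast
qed

lemma graph_iso_nat_path_move_run:
  assumes "A \<inter> {p - 1..p + r} = {}" "A \<inter> {q - 1..q + r} = {}"
  shows "graph_iso (A \<union> {p..<p+r}) (nat_path_edges (A \<union> {p..<p+r}))
           (A \<union> {q..<q+r}) (nat_path_edges (A \<union> {q..<q+r}))"
proof -
  have split: "nat_path_edges (A \<union> {c..<c+r}) = nat_path_edges A \<union> nat_path_edges {c..<c+r}"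
    if "A \<inter> {c - 1..c + r} = {}" for c
  proof (rule nat_path_edges_Un)
    fix x y assume "x \<in> A" "y \<in> {c..<c+r}"
    then show "y \<noteq> Suc x \<and> x \<noteq> Suc y" using that by (cases "y = c") fastforce+
  qed
  show ?thesis
    unfolding split[OF assms(1)] split[OF assms(2)]
    using assms by (intro graph_iso_Un graph_iso_refl graph_iso_nat_path_interval nat_path_edges_subset_Pow)
      (auto simp: disjoint_iff)
qed

section \<open>Extending a partial copy\<close>

definition induces_copy :: "'b set \<Rightarrow> 'b set set \<Rightarrow> nat set \<Rightarrow> bool" where
  "induces_copy W F S \<longleftrightarrow> graph_iso S (nat_path_edges S) W F"

definition ext_count :: "'b set \<Rightarrow> 'b set set \<Rightarrow> nat set \<Rightarrow> nat set \<Rightarrow> nat" where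
  "ext_count W F D K = card {X. X \<subseteq> D \<and> induces_copy W F (X \<union> K)}"

lemma induces_copy_card:
  assumes "induces_copy W F S" "finite W"
  shows "finite S \<and> card S = card W"
proof -
  obtain f where "bij_betw f S W" using assms(1) unfolding induces_copy_def graph_iso_def by blast
  then show ?thesis using assms(2) bij_betw_finite bij_betw_same_card by blast
qed

lemma card_le_if_induces_copy_Un:
  assumes "induces_copy W F (X \<union> K)" "finite W" "card W = t + card K" "X \<inter> K = {}"
  shows "card X \<le> t"
proof -
  have "finite X" "finite K" "card (X \<union> K) = card W" using induces_copy_card[OF assms(1,2)] by auto
  then show ?thesis using card_Un_disjoint[of X K] assms(3,4) by simp
qed

lemma ext_count_insert:
  assumes "finite D" "v \<notin> D"
  shows "ext_count W F (insert v D) K =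
    ext_count W F D K + card {X. X \<subseteq> insert v D \<and> v \<in> X \<and> induces_copy W F (X \<union> K)}"
proof -
  let ?A = "{X. X \<subseteq> D \<and> induces_copy W F (X \<union> K)}"
  let ?B = "{X. X \<subseteq> insert v D \<and> v \<in> X \<and> induces_copy W F (X \<union> K)}"
  have "{X. X \<subseteq> insert v D \<and> induces_copy W F (X \<union> K)} = ?A \<union> ?B"
    by auto
  moreover have "finite ?A" "finite ?B"
    using assms(1) by (auto intro: finite_subset[of _ "Pow (insert v D)"])
  moreover have "?A \<inter> ?B = {}" using assms(2) by auto
  ultimately show ?thesis unfolding ext_count_def by (simp add: card_Un_disjoint)
qed

lemma ext_count_saturated:
  assumes "finite W" "card W = card K" "D \<inter> K = {}"
  shows "ext_count W F D K = of_bool (induces_copy W F K)"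
proof -
  have empty: "X = {}" if "X \<subseteq> D" "induces_copy W F (X \<union> K)" for X
  proof -
    have "finite X" using induces_copy_card[OF that(2) assms(1)] by simp
    moreover have "card X \<le> 0"
      using card_le_if_induces_copy_Un[OF that(2) assms(1)] that(1) assms(2,3) by auto
    ultimately show ?thesis by simp
  qed
  have "{X. X \<subseteq> D \<and> induces_copy W F (X \<union> K)} = (if induces_copy W F K then {{}} else {})"
  proof (rule set_eqI)
    show "X \<in> {X. X \<subseteq> D \<and> induces_copy W F (X \<union> K)} \<longleftrightarrow> X \<in> (if induces_copy W F K then {{}} else {})"
      for X by (cases "X = {}") (auto dest: empty)
  qed
  then show ?thesis unfolding ext_count_def by simp
qed

lemma card_run_sets_eq_ext_count:
  assumes "(D \<union> K) \<inter> {p - 1..p + r} = {}" "(D \<union> K) \<inter> {q - 1..q + r} = {}"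
  shows "card {Z. Z \<subseteq> D \<and> induces_copy W F (Z \<union> {p..<p+r} \<union> K)} = ext_count W F D (K \<union> {q..<q+r})"
proof -
  have "induces_copy W F (Z \<union> {p..<p+r} \<union> K) \<longleftrightarrow> induces_copy W F (Z \<union> (K \<union> {q..<q+r}))"
    if "Z \<subseteq> D" for Z
  proof -
    have "(Z \<union> K) \<inter> {p - 1..p + r} = {}" "(Z \<union> K) \<inter> {q - 1..q + r} = {}" using assms that by auto
    note move = graph_iso_iff_left[OF graph_iso_nat_path_move_run[OF this]]
    have "Z \<union> {p..<p+r} \<union> K = (Z \<union> K) \<union> {p..<p+r}" "Z \<union> (K \<union> {q..<q+r}) = (Z \<union> K) \<union> {q..<q+r}"
      by auto
    then show ?thesis unfolding induces_copy_def using move by (simp only:)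
  qed
  then have "(Z \<subseteq> D \<and> induces_copy W F (Z \<union> {p..<p+r} \<union> K)) \<longleftrightarrow>
      (Z \<subseteq> D \<and> induces_copy W F (Z \<union> (K \<union> {q..<q+r})))" for Z
    by blast
  then show ?thesis unfolding ext_count_def by (simp only:)
qed

lemma card_supersets_avoiding:
  assumes "R \<subseteq> D" "g \<notin> R"
  shows "card {X. X \<subseteq> D \<and> R \<subseteq> X \<and> g \<notin> X \<and> P X} = card {Z. Z \<subseteq> D - R - {g} \<and> P (Z \<union> R)}"
proof -
  have "bij_betw (\<lambda>Z. Z \<union> R) {Z. Z \<subseteq> D - R - {g} \<and> P (Z \<union> R)} {X. X \<subseteq> D \<and> R \<subseteq> X \<and> g \<notin> X \<and> P X}"
  proof (rule bij_betw_byWitness[where f'="\<lambda>X. X - R"])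
    show "(\<lambda>X. X - R) ` {X. X \<subseteq> D \<and> R \<subseteq> X \<and> g \<notin> X \<and> P X} \<subseteq> {Z. Z \<subseteq> D - R - {g} \<and> P (Z \<union> R)}"
      by (auto simp: Un_absorb2)
  qed (use assms in auto)
  then show ?thesis by (simp add: bij_betw_same_card)
qed

lemma obtain_first_gap:
  assumes "finite X" "card X \<le> t" "inj_on pos {..t}" "pos 0 \<in> X"
  obtains r where "r \<in> {1..t}" "pos ` {..<r} \<subseteq> X" "pos r \<notin> X"
proof -
  have "\<not> pos ` {..t} \<subseteq> X"
  proof
    assume "pos ` {..t} \<subseteq> X"
    then have "card (pos ` {..t}) \<le> card X" using assms(1) by (rule card_mono[rotated])
    moreover have "card (pos ` {..t}) = Suc t" using assms(3) by (simp add: card_image)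
    ultimately show False using assms(2) by simp
  qed
  then obtain i where i: "i \<le> t" "pos i \<notin> X" by auto
  define r where "r = (LEAST i. pos i \<notin> X)"
  have "pos r \<notin> X" unfolding r_def by (rule LeastI[of _ i]) (rule i(2))
  moreover have "r \<le> i" unfolding r_def by (rule Least_le) (rule i(2))
  moreover have "pos ` {..<r} \<subseteq> X" unfolding r_def using not_less_Least by blast
  moreover have "r \<noteq> 0" using assms(4) \<open>pos r \<notin> X\<close> by (cases r) auto
  ultimately show ?thesis using i by (intro that[of r]) auto
qed

lemma card_sets_split_first_gap:
  fixes pos :: "nat \<Rightarrow> 'a"
  assumes fin: "finite D" and bound: "\<And>X. X \<subseteq> D \<Longrightarrow> P X \<Longrightarrow> card X \<le> t"
    and inj: "inj_on pos {..t}" and sub: "pos ` {..<t} \<subseteq> D"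
  shows "card {X. X \<subseteq> D \<and> pos 0 \<in> X \<and> P X}
       = (\<Sum>r=1..t. card {Z. Z \<subseteq> D - pos ` {..<r} - {pos r} \<and> P (Z \<union> pos ` {..<r})})"
proof -
  define A where "A r = {X. X \<subseteq> D \<and> pos ` {..<r} \<subseteq> X \<and> pos r \<notin> X \<and> P X}" for r
  have "{X. X \<subseteq> D \<and> pos 0 \<in> X \<and> P X} \<subseteq> (\<Union>r\<in>{1..t}. A r)"
  proof
    fix X assume X: "X \<in> {X. X \<subseteq> D \<and> pos 0 \<in> X \<and> P X}"
    then have "finite X" "card X \<le> t" using fin bound finite_subset by auto
    then obtain r where "r \<in> {1..t}" "pos ` {..<r} \<subseteq> X" "pos r \<notin> X"
      using X by (auto elim: obtain_first_gap[OF _ _ inj])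
    then show "X \<in> (\<Union>r\<in>{1..t}. A r)" using X unfolding A_def by blast
  qed
  moreover have "(\<Union>r\<in>{1..t}. A r) \<subseteq> {X. X \<subseteq> D \<and> pos 0 \<in> X \<and> P X}"
    unfolding A_def by force
  ultimately have eq: "{X. X \<subseteq> D \<and> pos 0 \<in> X \<and> P X} = (\<Union>r\<in>{1..t}. A r)" by blast
  have "card (\<Union>r\<in>{1..t}. A r) = (\<Sum>r=1..t. card (A r))"
  proof (rule card_UN_disjoint)
    show "\<forall>r\<in>{1..t}. finite (A r)" unfolding A_def using fin by (auto intro: finite_subset[of _ "Pow D"])
    show "\<forall>r\<in>{1..t}. \<forall>r'\<in>{1..t}. r \<noteq> r' \<longrightarrow> A r \<inter> A r' = {}"
    proof (intro ballI impI)
      fix r r' :: nat assume "r \<noteq> r'"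
      then have "r < r' \<or> r' < r" by auto
      then show "A r \<inter> A r' = {}" unfolding A_def by auto
    qed
  qed simp
  also have "\<dots> = (\<Sum>r=1..t. card {Z. Z \<subseteq> D - pos ` {..<r} - {pos r} \<and> P (Z \<union> pos ` {..<r})})"
  proof (rule sum.cong[OF refl])
    fix r assume r: "r \<in> {1..t}"
    have "pos r \<notin> pos ` {..<r}" using inj r by (fastforce simp: inj_on_def)
    then show "card (A r) = card {Z. Z \<subseteq> D - pos ` {..<r} - {pos r} \<and> P (Z \<union> pos ` {..<r})}"
      unfolding A_def using sub r by (intro card_supersets_avoiding) auto
  qed
  finally show ?thesis using eq by simp
qed

lemma Int_interval_below_eq_empty:
  "(\<And>y. y \<in> A \<Longrightarrow> Suc y < m) \<Longrightarrow> A \<inter> {m - 1..m + r} = {}"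
  by fastforce

lemma card_sets_with_right_run:
  assumes W: "finite W" "card W = t + card K" and fin: "finite E"
    and hole: "v \<notin> E" "v - 1 \<notin> E" and run: "{Suc v..<v + t} \<subseteq> E"
    and K_far: "\<forall>x\<in>K. \<forall>y\<in>insert v E. Suc y < x" and m_far: "\<forall>y\<in>insert v E \<union> K. Suc y < m"
  shows "card {X. X \<subseteq> insert v E \<and> v \<in> X \<and> induces_copy W F (X \<union> K)}
       = (\<Sum>r=1..t. ext_count W F (E - {Suc v..v + r}) (K \<union> {m..<m + r}))"
proof -
  have bound: "card X \<le> t" if "X \<subseteq> insert v E" "induces_copy W F (X \<union> K)" for X
    using that K_far by (intro card_le_if_induces_copy_Un[OF _ W]) fastforce+
  have img: "(+) v ` {..<r} = {v..<v + r}" for r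
    using image_add_atLeastLessThan[of v 0 r] by (simp add: lessThan_atLeast0 add.commute)
  have run': "{v..<v + t} \<subseteq> insert v E"
  proof
    show "x \<in> insert v E" if "x \<in> {v..<v + t}" for x using that run by (cases "x = v") auto
  qed
  have "card {X. X \<subseteq> insert v E \<and> (+) v 0 \<in> X \<and> induces_copy W F (X \<union> K)}
      = (\<Sum>r=1..t. card {Z. Z \<subseteq> insert v E - (+) v ` {..<r} - {v + r} \<and>
                              induces_copy W F (Z \<union> (+) v ` {..<r} \<union> K)})"
    by (rule card_sets_split_first_gap[where P = "\<lambda>X. induces_copy W F (X \<union> K)"])
      (use fin bound run' in \<open>auto simp: img\<close>)
  also have "\<dots> = (\<Sum>r=1..t. ext_count W F (E - {Suc v..v + r}) (K \<union> {m..<m + r}))"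
  proof (rule sum.cong[OF refl])
    fix r assume r: "r \<in> {1..t}"
    have dom: "insert v E - {v..<v + r} - {v + r} = E - {Suc v..v + r}"
      using hole(1) r by (auto simp: not_less_eq_eq dest: le_antisym)
    have "v + r - 1 \<in> insert v E"
    proof (cases "r = 1")
      case False
      then have "v + r - 1 \<in> {Suc v..<v + t}" using r by auto
      then show ?thesis using run by blast
    qed simp
    then have "K \<inter> {v - 1..v + r} = {}" using K_far by fastforce
    moreover have "{v - 1..v + r} = {v - 1, v} \<union> {Suc v..v + r}" by (cases v) auto
    ultimately have "(E - {Suc v..v + r} \<union> K) \<inter> {v - 1..v + r} = {}"
      using hole by auto
    moreover have "(E - {Suc v..v + r} \<union> K) \<inter> {m - 1..m + r} = {}"
      using m_far by (intro Int_interval_below_eq_empty) blast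
    ultimately show "card {Z. Z \<subseteq> insert v E - (+) v ` {..<r} - {v + r} \<and>
          induces_copy W F (Z \<union> (+) v ` {..<r} \<union> K)} = ext_count W F (E - {Suc v..v + r}) (K \<union> {m..<m + r})"
      unfolding img dom by (rule card_run_sets_eq_ext_count)
  qed
  finally show ?thesis by simp
qed

lemma card_sets_with_left_run:
  assumes W: "finite W" "card W = t + card K" and fin: "finite E"
    and hole: "v \<notin> E" "Suc v \<notin> E" and run: "{Suc v - t..<v} \<subseteq> E" and "t \<le> v"
    and K_far: "\<forall>x\<in>K. \<forall>y\<in>insert v E. Suc y < x" and m_far: "\<forall>y\<in>insert v E \<union> K. Suc y < m"
  shows "card {X. X \<subseteq> insert v E \<and> v \<in> X \<and> induces_copy W F (X \<union> K)}
       = (\<Sum>r=1..t. ext_count W F (E - {v - r..<v}) (K \<union> {m..<m + r}))"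
proof -
  have bound: "card X \<le> t" if "X \<subseteq> insert v E" "induces_copy W F (X \<union> K)" for X
    using that K_far by (intro card_le_if_induces_copy_Un[OF _ W]) fastforce+
  have img: "(\<lambda>i. v - i) ` {..<r} = {Suc v - r..<Suc v}" if "r \<le> Suc v" for r
  proof (rule set_eqI)
    show "x \<in> (\<lambda>i. v - i) ` {..<r} \<longleftrightarrow> x \<in> {Suc v - r..<Suc v}" for x
      using that by (auto intro: image_eqI[of _ _ "v - x"])
  qed
  have run': "(\<lambda>i. v - i) ` {..<t} \<subseteq> insert v E"
    unfolding img[OF le_SucI[OF \<open>t \<le> v\<close>]]
  proof
    show "x \<in> insert v E" if "x \<in> {Suc v - t..<Suc v}" for x using that run by (cases "x = v") auto
  qed
  have "card {X. X \<subseteq> insert v E \<and> v - 0 \<in> X \<and> induces_copy W F (X \<union> K)}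
      = (\<Sum>r=1..t. card {Z. Z \<subseteq> insert v E - (\<lambda>i. v - i) ` {..<r} - {v - r} \<and>
                              induces_copy W F (Z \<union> (\<lambda>i. v - i) ` {..<r} \<union> K)})"
    by (rule card_sets_split_first_gap[where P = "\<lambda>X. induces_copy W F (X \<union> K)"])
      (use fin bound run' \<open>t \<le> v\<close> in \<open>auto simp: inj_on_def\<close>)
  also have "\<dots> = (\<Sum>r=1..t. ext_count W F (E - {v - r..<v}) (K \<union> {m..<m + r}))"
  proof (rule sum.cong[OF refl])
    fix r assume r: "r \<in> {1..t}"
    then have r_le: "r \<le> Suc v" using \<open>t \<le> v\<close> by simp
    have dom: "insert v E - {Suc v - r..<Suc v} - {v - r} = E - {v - r..<v}"
      using hole(1) r \<open>t \<le> v\<close> by (auto; (linarith | metis less_Suc_eq))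
    have "K \<inter> {v - r..Suc v} = {}" using K_far by fastforce
    then have "(E - {v - r..<v} \<union> K) \<inter> {Suc v - r - 1..Suc v - r + r} = {}"
      using hole r_le by (auto simp: le_Suc_eq dest: le_antisym)
    moreover have "(E - {v - r..<v} \<union> K) \<inter> {m - 1..m + r} = {}"
      using m_far by (intro Int_interval_below_eq_empty) blast
    ultimately have "card {Z. Z \<subseteq> E - {v - r..<v} \<and> induces_copy W F (Z \<union> {Suc v - r..<Suc v - r + r} \<union> K)}
        = ext_count W F (E - {v - r..<v}) (K \<union> {m..<m + r})"
      by (rule card_run_sets_eq_ext_count)
    then show "card {Z. Z \<subseteq> insert v E - (\<lambda>i. v - i) ` {..<r} - {v - r} \<and>
          induces_copy W F (Z \<union> (\<lambda>i. v - i) ` {..<r} \<union> K)} = ext_count W F (E - {v - r..<v}) (K \<union> {m..<m + r})"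
      unfolding img[OF r_le] dom using r_le by simp
  qed
  finally show ?thesis by simp
qed

section \<open>Sliding a gap\<close>

text \<open>\<open>t\<close> vertices remain to be chosen; \<open>E\<close> has the gap \<open>{a..Suc b}\<close> with \<open>t - 1\<close> of
  its points on each side, and the vertices \<open>K\<close> chosen so far lie beyond, separated by a gap.\<close>

definition hole_config :: "nat \<Rightarrow> nat set \<Rightarrow> nat set \<Rightarrow> nat \<Rightarrow> nat \<Rightarrow> bool" where
  "hole_config t K E a b \<longleftrightarrow> finite K \<and> finite E \<and> a \<le> b \<and> t \<le> a \<and> E \<inter> {a..Suc b} = {} \<and>
     {Suc a - t..<a} \<subseteq> E \<and> {b + 2..b + t} \<subseteq> E \<and> (\<forall>x\<in>K. \<forall>y\<in>E \<union> {a..Suc b}. Suc y < x)"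

lemma hole_config_neighbourhood:
  assumes "hole_config t K E a b" "r < t"
  shows "{a - r..b + r + 1} \<subseteq> E \<union> {a..Suc b}"
proof
  have left: "{Suc a - t..<a} \<subseteq> E" and right: "{b + 2..b + t} \<subseteq> E"
    using assms(1) unfolding hole_config_def by auto
  fix x assume x: "x \<in> {a - r..b + r + 1}"
  consider "x < a" | "x \<in> {a..Suc b}" | "Suc b < x" by fastforce
  then show "x \<in> E \<union> {a..Suc b}"
  proof cases
    case 1
    then have "x \<in> {Suc a - t..<a}" using x \<open>r < t\<close> by auto
    then show ?thesis using left by blast
  next
    case 3
    then have "x \<in> {b + 2..b + t}" using x \<open>r < t\<close> by auto
    then show ?thesis using right by blast
  qed simp
qed

lemma hole_config_shifted:
  assumes cfg: "hole_config t K E a b" and "j < r" "r < t"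
  shows "hole_config (t - r) K (E - {a - r..b + r + 1} \<union> {a - r..<a - r + j} \<union> {b + 3 + j..b + r + 1})
           (a - r + j) (b + 1 + j)"
proof -
  have fin: "finite K" "finite E" and "a \<le> b" "t \<le> a"
    and left: "{Suc a - t..<a} \<subseteq> E" and right: "{b + 2..b + t} \<subseteq> E"
    and far: "\<forall>x\<in>K. \<forall>y\<in>E \<union> {a..Suc b}. Suc y < x"
    using cfg unfolding hole_config_def by auto
  let ?E = "E - {a - r..b + r + 1} \<union> {a - r..<a - r + j} \<union> {b + 3 + j..b + r + 1}"
  have "{a - r..b + r + 1} \<subseteq> E \<union> {a..Suc b}"
    using hole_config_neighbourhood[OF cfg \<open>r < t\<close>] .
  moreover have "?E \<union> {a - r + j..Suc (b + 1 + j)} \<subseteq> E \<union> {a - r..b + r + 1}"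
    using \<open>j < r\<close> \<open>a \<le> b\<close> by auto
  ultimately have "\<forall>x\<in>K. \<forall>y\<in>?E \<union> {a - r + j..Suc (b + 1 + j)}. Suc y < x"
    using far by blast
  moreover have "{Suc (a - r + j) - (t - r)..<a - r + j} \<subseteq> ?E"
  proof
    fix x assume x: "x \<in> {Suc (a - r + j) - (t - r)..<a - r + j}"
    show "x \<in> ?E"
    proof (cases "x < a - r")
      case True
      then have "x \<in> {Suc a - t..<a}" using x \<open>t \<le> a\<close> \<open>r < t\<close> by auto
      then have "x \<in> E" using left by blast
      then show ?thesis using True by auto
    qed (use x in auto)
  qed
  moreover have "{b + 1 + j + 2..b + 1 + j + (t - r)} \<subseteq> ?E"
  proof
    fix x assume x: "x \<in> {b + 1 + j + 2..b + 1 + j + (t - r)}"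
    show "x \<in> ?E"
    proof (cases "x \<le> b + r + 1")
      case False
      then have "x \<in> {b + 2..b + t}" using x \<open>j < r\<close> \<open>r < t\<close> by auto
      then have "x \<in> E" using right by blast
      then show ?thesis using False by auto
    qed (use x in auto)
  qed
  ultimately show ?thesis
    unfolding hole_config_def using fin \<open>a \<le> b\<close> \<open>t \<le> a\<close> \<open>j < r\<close> by auto
qed

lemma ext_count_shift_hole:
  assumes slide: "\<And>E' a' b'. hole_config (t - r) K E' a' b' \<Longrightarrow>
      ext_count W F (insert (Suc b') E') K = ext_count W F (insert a' E') K"
    and cfg: "hole_config t K E a b" and "r < t"
  shows "ext_count W F (E - {Suc (Suc b)..Suc b + r}) K = ext_count W F (E - {a - r..<a}) K"
proof -
  have "a \<le> b" "t \<le> a" and hole: "E \<inter> {a..Suc b} = {}"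
    and left: "{Suc a - t..<a} \<subseteq> E" and right: "{b + 2..b + t} \<subseteq> E"
    using cfg unfolding hole_config_def by auto
  define D where "D j = E - {a - r..b + r + 1} \<union> {a - r..<a - r + j} \<union> {b + 2 + j..b + r + 1}" for j
  have step: "ext_count W F (D (Suc j)) K = ext_count W F (D j) K" if "j < r" for j
  proof -
    let ?E = "E - {a - r..b + r + 1} \<union> {a - r..<a - r + j} \<union> {b + 3 + j..b + r + 1}"
    have "D j = insert (Suc (b + 1 + j)) ?E" "D (Suc j) = insert (a - r + j) ?E"
      using that unfolding D_def by auto
    then show ?thesis using slide[OF hole_config_shifted[OF cfg that \<open>r < t\<close>]] by simp
  qed
  have "ext_count W F (D j) K = ext_count W F (D 0) K" if "j \<le> r" for j
    using that by (induction j) (simp_all add: step)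
  moreover have "D 0 = E - {a - r..<a}"
  proof -
    have "{b + 2..b + r + 1} \<subseteq> E" using \<open>r < t\<close> by (intro order_trans[OF _ right]) auto
    then show ?thesis unfolding D_def using hole \<open>a \<le> b\<close> by auto
  qed
  moreover have "D r = E - {Suc (Suc b)..Suc b + r}"
  proof -
    have "{a - r..<a} \<subseteq> E" using \<open>r < t\<close> by (intro order_trans[OF _ left]) auto
    moreover have "a - r + r = a" using \<open>r < t\<close> \<open>t \<le> a\<close> by simp
    ultimately show ?thesis unfolding D_def using hole \<open>a \<le> b\<close> by (auto simp: subset_iff)
  qed
  ultimately show ?thesis by (metis order_refl)
qed

lemma hole_config_disjoint: "hole_config t K E a b \<Longrightarrow> E \<inter> K = {}"
  unfolding hole_config_def by (meson UnI1 disjoint_iff lessI less_asym)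

lemma hole_config_add_far_run:
  assumes cfg: "hole_config t K E a b" and m_far: "\<forall>y\<in>E \<union> {a..Suc b} \<union> K. Suc y < m"
  shows "hole_config t (K \<union> {m..<m + r}) E a b" "card (K \<union> {m..<m + r}) = card K + r"
proof -
  have "finite K" and far: "\<forall>x\<in>K. \<forall>y\<in>E \<union> {a..Suc b}. Suc y < x"
    using cfg unfolding hole_config_def by auto
  have "\<forall>x\<in>K \<union> {m..<m + r}. \<forall>y\<in>E \<union> {a..Suc b}. Suc y < x"
  proof (intro ballI)
    fix x y assume x: "x \<in> K \<union> {m..<m + r}" and y: "y \<in> E \<union> {a..Suc b}"
    have "Suc y < m" using m_far y by blast
    then show "Suc y < x" using x far y by auto
  qed
  then show "hole_config t (K \<union> {m..<m + r}) E a b"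
    using cfg \<open>finite K\<close> unfolding hole_config_def by blast
  have "Suc x < m" if "x \<in> K" for x using m_far that by blast
  then have "K \<inter> {m..<m + r} = {}" by fastforce
  then show "card (K \<union> {m..<m + r}) = card K + r" using \<open>finite K\<close> by (simp add: card_Un_disjoint)
qed

lemma card_sets_through_hole_ends:
  assumes W: "finite W" "card W = t + card K" and cfg: "hole_config t K E a b"
    and m_far: "\<forall>y\<in>E \<union> {a..Suc b} \<union> K. Suc y < m"
  shows "card {X. X \<subseteq> insert (Suc b) E \<and> Suc b \<in> X \<and> induces_copy W F (X \<union> K)}
       = (\<Sum>r=1..t. ext_count W F (E - {Suc (Suc b)..Suc b + r}) (K \<union> {m..<m + r}))"
    and "card {X. X \<subseteq> insert a E \<and> a \<in> X \<and> induces_copy W F (X \<union> K)}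
       = (\<Sum>r=1..t. ext_count W F (E - {a - r..<a}) (K \<union> {m..<m + r}))"
proof -
  have fin: "finite E" and "a \<le> b" "t \<le> a" and hole: "E \<inter> {a..Suc b} = {}"
    and left: "{Suc a - t..<a} \<subseteq> E" and right: "{b + 2..b + t} \<subseteq> E"
    and far: "\<forall>x\<in>K. \<forall>y\<in>E \<union> {a..Suc b}. Suc y < x"
    using cfg unfolding hole_config_def by auto
  have not_in_E: "a \<notin> E" "Suc a \<notin> E" "Suc b - 1 \<notin> E" "Suc b \<notin> E" using hole \<open>a \<le> b\<close> by auto
  have far_from: "\<forall>x\<in>K. \<forall>y\<in>insert v E. Suc y < x" "\<forall>y\<in>insert v E \<union> K. Suc y < m"
    if "v \<in> {a..Suc b}" for v
    using far m_far that by auto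
  have ends: "a \<in> {a..Suc b}" "Suc b \<in> {a..Suc b}" using \<open>a \<le> b\<close> by auto
  have "{Suc (Suc b)..<Suc b + t} \<subseteq> E" using right by auto
  then show "card {X. X \<subseteq> insert (Suc b) E \<and> Suc b \<in> X \<and> induces_copy W F (X \<union> K)}
       = (\<Sum>r=1..t. ext_count W F (E - {Suc (Suc b)..Suc b + r}) (K \<union> {m..<m + r}))"
    by (rule card_sets_with_right_run[OF W fin not_in_E(4,3) _ far_from[OF ends(2)]])
  show "card {X. X \<subseteq> insert a E \<and> a \<in> X \<and> induces_copy W F (X \<union> K)}
       = (\<Sum>r=1..t. ext_count W F (E - {a - r..<a}) (K \<union> {m..<m + r}))"
    by (rule card_sets_with_left_run[OF W fin not_in_E(1,2) left \<open>t \<le> a\<close> far_from[OF ends(1)]])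
qed

lemma ext_count_slide:
  assumes "finite W" "card W = t + card K" "hole_config t K E a b"
  shows "ext_count W F (insert (Suc b) E) K = ext_count W F (insert a E) K"
  using assms(2,3)
proof (induction t arbitrary: K E a b rule: less_induct)
  case (less t K E a b)
  have fin: "finite K" "finite E" and hole: "a \<notin> E" "Suc b \<notin> E"
    using less.prems(2) unfolding hole_config_def by auto
  define m where "m = Suc (Suc (Max (E \<union> {a..Suc b} \<union> K)))"
  have m_far: "\<forall>y\<in>E \<union> {a..Suc b} \<union> K. Suc y < m"
    using fin by (auto simp: m_def less_Suc_eq_le)
  note runs = card_sets_through_hole_ends[OF assms(1) less.prems m_far]
  have "ext_count W F (E - {Suc (Suc b)..Suc b + r}) (K \<union> {m..<m + r})
      = ext_count W F (E - {a - r..<a}) (K \<union> {m..<m + r})" if r: "r \<in> {1..t}" for r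
  proof (cases "r = t")
    case True
    have "(E - D) \<inter> (K \<union> {m..<m + r}) = {}" for D
      using hole_config_disjoint[OF hole_config_add_far_run(1)[OF less.prems(2) m_far]] by blast
    moreover have "card W = card (K \<union> {m..<m + r})"
      using less.prems(1) hole_config_add_far_run(2)[OF less.prems(2) m_far] True by simp
    ultimately show ?thesis by (simp only: ext_count_saturated[OF assms(1)])
  next
    case False
    then have "r < t" using r by simp
    have slide: "ext_count W F (insert (Suc b') E') (K \<union> {m..<m + r}) =
        ext_count W F (insert a' E') (K \<union> {m..<m + r})"
      if "hole_config (t - r) (K \<union> {m..<m + r}) E' a' b'" for E' a' b'
      using less.IH[OF _ _ that] less.prems(1) hole_config_add_far_run(2)[OF less.prems(2) m_far]
        \<open>r < t\<close> r by simp
    show ?thesis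
      by (rule ext_count_shift_hole[OF slide hole_config_add_far_run(1)[OF less.prems(2) m_far] \<open>r < t\<close>])
  qed
  then have "card {X. X \<subseteq> insert (Suc b) E \<and> Suc b \<in> X \<and> induces_copy W F (X \<union> K)}
      = card {X. X \<subseteq> insert a E \<and> a \<in> X \<and> induces_copy W F (X \<union> K)}"
    unfolding runs by (rule sum.cong[OF refl])
  then show ?case
    by (simp only: ext_count_insert[OF fin(2) hole(1)] ext_count_insert[OF fin(2) hole(2)])
qed

section \<open>Path decompositions as blocks of naturals\<close>

fun nat_blocks :: "nat \<Rightarrow> nat list \<Rightarrow> nat set" where
  "nat_blocks s [] = {}"
| "nat_blocks s (l # ls) = {s..<s + l} \<union> nat_blocks (s + l + 1) ls"

lemma nat_blocks_ge: "y \<in> nat_blocks s ls \<Longrightarrow> s \<le> y"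
  by (induction ls arbitrary: s) fastforce+

lemma finite_nat_blocks: "finite (nat_blocks s ls)"
  by (induction ls arbitrary: s) auto

lemma doubleton_nth_in_path_edges:
  assumes "distinct xs" "i < length xs" "j < length xs"
  shows "{xs ! i, xs ! j} \<in> {{xs ! l, xs ! Suc l} | l. Suc l < length xs} \<longleftrightarrow> j = Suc i \<or> i = Suc j"
proof
  assume "{xs ! i, xs ! j} \<in> {{xs ! l, xs ! Suc l} | l. Suc l < length xs}"
  then obtain l where l: "Suc l < length xs" "{xs ! i, xs ! j} = {xs ! l, xs ! Suc l}" by auto
  then have "(xs ! i = xs ! l \<and> xs ! j = xs ! Suc l) \<or> (xs ! i = xs ! Suc l \<and> xs ! j = xs ! l)"
    by (auto simp: doubleton_eq_iff)
  then show "j = Suc i \<or> i = Suc j" using assms l(1) by (auto simp: nth_eq_iff_index_eq)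
next
  assume "j = Suc i \<or> i = Suc j"
  then show "{xs ! i, xs ! j} \<in> {{xs ! l, xs ! Suc l} | l. Suc l < length xs}"
    using assms by (auto simp: insert_commute)
qed

lemma path_graph_edges_subset_Pow: "is_path_graph p EP \<Longrightarrow> EP \<subseteq> Pow p"
  unfolding is_path_graph_def by auto

lemma graph_iso_interval_path_graph:
  assumes "is_path_graph p EP"
  shows "graph_iso {s..<s + card p} (nat_path_edges {s..<s + card p}) p EP"
proof -
  obtain xs where xs: "distinct xs" "set xs = p" "EP = {{xs ! i, xs ! Suc i} | i. Suc i < length xs}"
    using assms unfolding is_path_graph_def by blast
  have n: "card p = length xs" using xs(1,2) distinct_card by metis
  have "bij_betw (\<lambda>y. y - s) {s..<s + card p} {..<length xs}"
    unfolding n by (rule bij_betw_byWitness[where f'="\<lambda>i. i + s"]) auto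
  then have "bij_betw (\<lambda>y. xs ! (y - s)) {s..<s + card p} p"
    using bij_betw_trans[OF _ bij_betw_nth[OF xs(1) refl xs(2)[symmetric]]] by (simp add: comp_def)
  moreover have "{x,y} \<in> nat_path_edges {s..<s + card p} \<longleftrightarrow> {xs ! (x - s), xs ! (y - s)} \<in> EP"
    if "x \<in> {s..<s + card p}" "y \<in> {s..<s + card p}" for x y
  proof -
    have lt: "x - s < length xs" "y - s < length xs" using that n by auto
    have "{x,y} \<in> nat_path_edges {s..<s + card p} \<longleftrightarrow> y - s = Suc (x - s) \<or> x - s = Suc (y - s)"
      using that by (auto simp: doubleton_in_nat_path_edges)
    also have "\<dots> \<longleftrightarrow> {xs ! (x - s), xs ! (y - s)} \<in> EP"
      unfolding xs(3) using doubleton_nth_in_path_edges[OF xs(1) lt] by simp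
    finally show ?thesis .
  qed
  ultimately show ?thesis unfolding graph_iso_def by blast
qed

lemma graph_iso_nat_blocks:
  assumes "distinct ps" "disjoint (set ps)" "\<forall>p\<in>set ps. is_path_graph p (EP p)"
  shows "graph_iso (nat_blocks s (map card ps)) (nat_path_edges (nat_blocks s (map card ps)))
           (\<Union>(set ps)) (\<Union>p\<in>set ps. EP p)"
  using assms
proof (induction ps arbitrary: s)
  case Nil
  then show ?case by (simp add: graph_iso_def bij_betw_def nat_path_edges_def)
next
  case (Cons p ps)
  let ?B = "nat_blocks (s + card p + 1) (map card ps)"
  have "disjoint (set ps)" using Cons.prems(2) by (simp add: pairwise_insert)
  moreover have "\<forall>q\<in>set ps. p \<inter> q = {}"
    using Cons.prems(1,2) by (auto simp: pairwise_insert disjnt_def)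
  ultimately have IH: "graph_iso ?B (nat_path_edges ?B) (\<Union>(set ps)) (\<Union>q\<in>set ps. EP q)"
    using Cons.prems(1,3) by (intro Cons.IH) simp_all
  have "{s..<s + card p} \<inter> ?B = {}" by (auto dest: nat_blocks_ge)
  moreover have "p \<inter> \<Union>(set ps) = {}" using \<open>\<forall>q\<in>set ps. p \<inter> q = {}\<close> by blast
  moreover have "(\<Union>q\<in>set ps. EP q) \<subseteq> Pow (\<Union>(set ps))"
  proof (rule UN_least)
    fix q assume "q \<in> set ps"
    then have "EP q \<subseteq> Pow q" using Cons.prems(3) by (intro path_graph_edges_subset_Pow) simp
    then show "EP q \<subseteq> Pow (\<Union>(set ps))" using \<open>q \<in> set ps\<close> by blast
  qed
  moreover have "EP p \<subseteq> Pow p" using Cons.prems(3) by (intro path_graph_edges_subset_Pow) simp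
  ultimately have "graph_iso ({s..<s + card p} \<union> ?B) (nat_path_edges {s..<s + card p} \<union> nat_path_edges ?B)
      (p \<union> \<Union>(set ps)) (EP p \<union> (\<Union>q\<in>set ps. EP q))"
    using Cons.prems(3) by (intro graph_iso_Un[OF graph_iso_interval_path_graph IH] nat_path_edges_subset_Pow) simp_all
  moreover have "nat_path_edges ({s..<s + card p} \<union> ?B) = nat_path_edges {s..<s + card p} \<union> nat_path_edges ?B"
    by (rule nat_path_edges_Un) (auto dest: nat_blocks_ge)
  ultimately show ?case by simp
qed

lemma card_path_graph_edges:
  assumes "is_path_graph p EP"
  shows "card EP + 1 = card p"
proof -
  obtain xs where xs: "xs \<noteq> []" "distinct xs" "set xs = p" "EP = {{xs ! i, xs ! Suc i} | i. Suc i < length xs}"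
    using assms unfolding is_path_graph_def by blast
  have "EP = (\<lambda>i. {xs ! i, xs ! Suc i}) ` {..<length xs - 1}"
    unfolding xs(4) by auto
  moreover have "inj_on (\<lambda>i. {xs ! i, xs ! Suc i}) {..<length xs - 1}"
  proof (rule inj_onI)
    fix i j assume "i \<in> {..<length xs - 1}" "j \<in> {..<length xs - 1}" "{xs ! i, xs ! Suc i} = {xs ! j, xs ! Suc j}"
    then show "i = j" using xs(2) by (auto simp: doubleton_eq_iff nth_eq_iff_index_eq)
  qed
  ultimately have "card EP = length xs - 1" by (simp add: card_image)
  moreover have "card p = length xs" using xs(2,3) distinct_card by blast
  ultimately show ?thesis using xs(1) by simp
qed

lemma card_edges_path_decomposition:
  assumes "finite V" "path_decomposition V E P"
  shows "card E + card P = card V"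
proof -
  have V: "\<Union>P = V" and disj: "disjoint P" and paths: "\<forall>p\<in>P. is_path_graph p (induced_edges E p)"
    and cover: "\<forall>e\<in>E. \<exists>p\<in>P. e \<subseteq> p"
    using assms(2) unfolding path_decomposition_def partition_on_def by auto
  have finP: "finite P" using assms(1) V by (metis finite_UnionD)
  have finp: "finite p" if "p \<in> P" for p using assms(1) V that by (metis Union_upper finite_subset)
  have "E = (\<Union>p\<in>P. induced_edges E p)" using cover by (auto simp: induced_edges_def)
  moreover have "card (\<Union>p\<in>P. induced_edges E p) = (\<Sum>p\<in>P. card (induced_edges E p))"
  proof (rule card_UN_disjoint[OF finP])
    show "\<forall>p\<in>P. finite (induced_edges E p)"
      using finp by (auto simp: induced_edges_def intro: finite_subset[of _ "Pow _"])
    have nonempty: "{} \<notin> induced_edges E p" if "p \<in> P" for p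
      using paths that unfolding is_path_graph_def by fastforce
    show "\<forall>p\<in>P. \<forall>q\<in>P. p \<noteq> q \<longrightarrow> induced_edges E p \<inter> induced_edges E q = {}"
    proof (intro ballI impI)
      fix p q assume pq: "p \<in> P" "q \<in> P" "p \<noteq> q"
      then have "p \<inter> q = {}" using disj by (auto simp: pairwise_def disjnt_def)
      then show "induced_edges E p \<inter> induced_edges E q = {}"
        using nonempty[OF pq(1)] by (auto simp: induced_edges_def) (metis Int_greatest subset_empty)
    qed
  qed
  ultimately have "card E + card P = (\<Sum>p\<in>P. card (induced_edges E p) + 1)"
    by (simp add: sum_Suc)
  also have "\<dots> = (\<Sum>p\<in>P. card p)"
    using paths card_path_graph_edges by (intro sum.cong) auto
  also have "\<dots> = card V"
    using card_Union_disjoint[OF disj finp] V by simp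
  finally show ?thesis .
qed

lemma path_decomposition_iso_nat_blocks:
  assumes "finite V" "path_decomposition V E P"
  obtains ls where "graph_iso (nat_blocks 1 ls) (nat_path_edges (nat_blocks 1 ls)) V E"
    "length ls + card E = card V" "set ls = card ` P" "sum_list ls = card V"
proof -
  have V: "\<Union>P = V" and disj: "disjoint P" and paths: "\<forall>p\<in>P. is_path_graph p (induced_edges E p)"
    and cover: "\<forall>e\<in>E. \<exists>p\<in>P. e \<subseteq> p"
    using assms(2) unfolding path_decomposition_def partition_on_def by auto
  have "finite P" using assms(1) V by (metis finite_UnionD)
  then obtain ps where ps: "set ps = P" "distinct ps" using finite_distinct_list by blast
  have "E = (\<Union>p\<in>P. induced_edges E p)" using cover by (auto simp: induced_edges_def)
  then have "graph_iso (nat_blocks 1 (map card ps)) (nat_path_edges (nat_blocks 1 (map card ps))) V E"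
    using graph_iso_nat_blocks[of ps "induced_edges E" 1] ps disj paths V by simp
  moreover have "length (map card ps) + card E = card V"
    using ps distinct_card card_edges_path_decomposition[OF assms] by fastforce
  moreover have "sum_list (map card ps) = card V"
  proof -
    have "finite p" if "p \<in> P" for p using assms(1) V that by (metis Union_upper finite_subset)
    then have "card (\<Union>P) = sum card P" using disj by (simp add: card_Union_disjoint)
    then show ?thesis using ps V by (simp add: sum_list_distinct_conv_sum_set)
  qed
  ultimately show ?thesis using that ps(1) by simp
qed

lemma induced_count_eq_ext_count:
  assumes "graph_iso M (nat_path_edges M) V E"
  shows "induced_count V E W F = ext_count W F M {}"
proof -
  have "induced_count V E W F = induced_count M (nat_path_edges M) W F"
    using induced_count_graph_iso[OF graph_iso_sym[OF assms]] .
  also have "\<dots> = ext_count W F M {}"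
    unfolding induced_count_def ext_count_def induces_copy_def
    by (rule arg_cong[where f = card]) (auto simp: induced_edges_nat_path_edges)
  finally show ?thesis .
qed

section \<open>Moving vertices between blocks\<close>

lemma ext_count_nat_blocks_move_vertex:
  assumes "finite W" "card W = k" "finite P" "P \<subseteq> {..<s}" "1 \<le> s" "k \<le> a" "k \<le> Suc b" "1 \<le> a"
  shows "ext_count W F (P \<union> nat_blocks s ((a - 1) # Suc b # rest)) {} =
    ext_count W F (P \<union> nat_blocks s (a # b # rest)) {}"
proof -
  define w where "w = s + a - 1"
  define E where "E = P \<union> {s..<w} \<union> {s + a + 1..<s + a + 1 + b} \<union> nat_blocks (s + a + b + 2) rest"
  have "{s + a..<s + a + Suc b} = insert (s + a) {s + a + 1..<s + a + 1 + b}" by auto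
  then have moved: "P \<union> nat_blocks s ((a - 1) # Suc b # rest) = insert (Suc w) E"
    unfolding E_def w_def using \<open>1 \<le> a\<close> by (auto simp: Un_assoc)
  have "{s..<s + a} = insert (s + a - 1) {s..<s + a - 1}" using \<open>1 \<le> a\<close> by auto
  then have unmoved: "P \<union> nat_blocks s (a # b # rest) = insert w E"
    unfolding E_def w_def by (auto simp: add.assoc)
  have "hole_config k {} E w w"
    unfolding hole_config_def
  proof (intro conjI)
    have "s + a + b + 2 \<le> x" if "x \<in> nat_blocks (s + a + b + 2) rest" for x
      using nat_blocks_ge that by blast
    then show "E \<inter> {w..Suc w} = {}" unfolding E_def w_def using assms by fastforce
    show "{Suc w - k..<w} \<subseteq> E" "{w + 2..w + k} \<subseteq> E" unfolding E_def w_def using assms by auto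
  qed (use assms finite_nat_blocks in \<open>auto simp: E_def w_def\<close>)
  then show ?thesis
    unfolding moved unmoved using ext_count_slide[OF assms(1)] assms(2) by simp
qed

lemma ext_count_nat_blocks_fill_first:
  assumes "finite W" "card W = k" "finite P" "P \<subseteq> {..<s}" "1 \<le> s" "k - 1 \<le> a" "k - 1 \<le> b"
  shows "ext_count W F (P \<union> nat_blocks s (a # b # rest)) {} =
    ext_count W F (P \<union> nat_blocks s ((k - 1) # (a + b - (k - 1)) # rest)) {}"
  using assms(6,7)
proof (induction "a - (k - 1)" arbitrary: a b)
  case 0
  then show ?case by simp
next
  case (Suc n)
  have "ext_count W F (P \<union> nat_blocks s ((a - 1) # Suc b # rest)) {} =
      ext_count W F (P \<union> nat_blocks s (a # b # rest)) {}"
    by (rule ext_count_nat_blocks_move_vertex[where k = k]) (use assms(1-5) Suc in auto)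
  moreover have "ext_count W F (P \<union> nat_blocks s ((a - 1) # Suc b # rest)) {} =
      ext_count W F (P \<union> nat_blocks s ((k - 1) # (a - 1 + Suc b - (k - 1)) # rest)) {}"
    by (rule Suc.hyps(1)) (use Suc in auto)
  ultimately show ?case using Suc by simp
qed

definition canonical_lengths :: "nat \<Rightarrow> nat list \<Rightarrow> nat list" where
  "canonical_lengths k xs =
     replicate (length xs - 1) (k - 1) @ [sum_list xs - (length xs - 1) * (k - 1)]"

lemma ext_count_nat_blocks_canonical:
  assumes "finite W" "card W = k"
  shows "finite P \<Longrightarrow> P \<subseteq> {..<s} \<Longrightarrow> 1 \<le> s \<Longrightarrow> k - 1 \<le> x \<Longrightarrow> \<forall>y\<in>set rest. k - 1 \<le> y \<Longrightarrow>
    ext_count W F (P \<union> nat_blocks s (x # rest)) {} =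
    ext_count W F (P \<union> nat_blocks s (canonical_lengths k (x # rest))) {}"
proof (induction rest arbitrary: x P s)
  case Nil
  then show ?case by (simp add: canonical_lengths_def)
next
  case (Cons y rest)
  define z where "z = x + y - (k - 1)"
  have "canonical_lengths k (x # y # rest) = (k - 1) # canonical_lengths k (z # rest)"
  proof -
    have "c \<le> x \<Longrightarrow> x + (y + R) - Suc n * c = (x + y - c) + R - n * c" for c R n :: nat
      by (simp add: algebra_simps)
    then have "x + (y + sum_list rest) - Suc (length rest) * (k - 1) = z + sum_list rest - length rest * (k - 1)"
      using Cons.prems(4) unfolding z_def by blast
    then show ?thesis unfolding canonical_lengths_def by simp
  qed
  then have canonical: "P \<union> nat_blocks s (canonical_lengths k (x # y # rest)) =
      (P \<union> {s..<s + (k - 1)}) \<union> nat_blocks (s + (k - 1) + 1) (canonical_lengths k (z # rest))"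
    by (simp add: Un_assoc)
  have "ext_count W F (P \<union> nat_blocks s (x # y # rest)) {} =
      ext_count W F (P \<union> nat_blocks s ((k - 1) # z # rest)) {}"
    unfolding z_def by (rule ext_count_nat_blocks_fill_first) (use assms Cons.prems in auto)
  also have "P \<union> nat_blocks s ((k - 1) # z # rest) =
      (P \<union> {s..<s + (k - 1)}) \<union> nat_blocks (s + (k - 1) + 1) (z # rest)"
    by (simp add: Un_assoc)
  also have "ext_count W F \<dots> {} =
      ext_count W F ((P \<union> {s..<s + (k - 1)}) \<union> nat_blocks (s + (k - 1) + 1) (canonical_lengths k (z # rest))) {}"
    by (rule Cons.IH) (use Cons.prems in \<open>auto simp: z_def\<close>)
  finally show ?case unfolding canonical .
qed

lemma ext_count_nat_blocks_eq:
  assumes "finite W" "card W = k" "length xs = length ys" "sum_list xs = sum_list ys"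
    "\<forall>x\<in>set xs. k - 1 \<le> x" "\<forall>y\<in>set ys. k - 1 \<le> y"
  shows "ext_count W F (nat_blocks 1 xs) {} = ext_count W F (nat_blocks 1 ys) {}"
proof (cases xs)
  case Nil
  then show ?thesis using assms by simp
next
  case (Cons x xs')
  then obtain y ys' where ys: "ys = y # ys'" using assms(3) by (cases ys) auto
  have "ext_count W F ({} \<union> nat_blocks 1 (x # xs')) {} = ext_count W F ({} \<union> nat_blocks 1 (canonical_lengths k (x # xs'))) {}"
    by (rule ext_count_nat_blocks_canonical) (use assms Cons in auto)
  moreover have "ext_count W F ({} \<union> nat_blocks 1 (y # ys')) {} = ext_count W F ({} \<union> nat_blocks 1 (canonical_lengths k (y # ys'))) {}"
    by (rule ext_count_nat_blocks_canonical) (use assms ys in auto)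
  moreover have "canonical_lengths k (x # xs') = canonical_lengths k (y # ys')"
    using assms(3,4) Cons ys unfolding canonical_lengths_def by simp
  ultimately show ?thesis using Cons ys by simp
qed

theorem theorem2p4:
  fixes V :: "'a set" and E :: "'a set set"
    and V' :: "'c set" and E' :: "'c set set"
    and W :: "'b set" and F :: "'b set set"
    and k :: nat
  assumes "finite W" and "linear_forest W F" and "card W = k"
    and "finite V" and "\<exists>P. path_decomposition V E P \<and> (\<forall>p\<in>P. k - 1 \<le> card p)"
    and "finite V'" and "\<exists>P. path_decomposition V' E' P \<and> (\<forall>p\<in>P. k - 1 \<le> card p)"
    and "card V = card V'" and "card E = card E'"
  shows "induced_count V E W F = induced_count V' E' W F"
proof -
  obtain P where P: "path_decomposition V E P" "\<forall>p\<in>P. k - 1 \<le> card p" using assms(5) by blast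
  obtain P' where P': "path_decomposition V' E' P'" "\<forall>p\<in>P'. k - 1 \<le> card p" using assms(7) by blast
  obtain ls where ls: "graph_iso (nat_blocks 1 ls) (nat_path_edges (nat_blocks 1 ls)) V E"
      "length ls + card E = card V" "set ls = card ` P" "sum_list ls = card V"
    using path_decomposition_iso_nat_blocks[OF assms(4) P(1)] by blast
  obtain ls' where ls': "graph_iso (nat_blocks 1 ls') (nat_path_edges (nat_blocks 1 ls')) V' E'"
      "length ls' + card E' = card V'" "set ls' = card ` P'" "sum_list ls' = card V'"
    using path_decomposition_iso_nat_blocks[OF assms(6) P'(1)] by blast
  have "induced_count V E W F = ext_count W F (nat_blocks 1 ls) {}"
    by (rule induced_count_eq_ext_count[OF ls(1)])
  also have "\<dots> = ext_count W F (nat_blocks 1 ls') {}"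
    using ls ls' P(2) P'(2) assms(8,9) by (intro ext_count_nat_blocks_eq[OF assms(1,3)]) auto
  also have "\<dots> = induced_count V' E' W F"
    by (rule induced_count_eq_ext_count[OF ls'(1), symmetric])
  finally show ?thesis .
qed

end
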